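(* Let $x\in\mathbb{R}^n$, $\Delta>0$, $p=(n+1)(n+2)/2$, and take the $p$ points $x$; $x+\Delta e_i$ ($i=1,\ldots,n$); $x-\Delta e_i$ ($i=1,\ldots,n$); $x+\Delta(e_i+e_j)$ ($1\le i<j\le n$). Let $\hat Q\in\mathbb{R}^{p\times p}$ be the matrix whose rows are $\phi(\hat s)^T$ for $\hat s=(y-x)/\Delta$ ranging over these points $y$. Then $\|\hat Q^{-1}\|_\infty\le 8$.
   Context: $e_i$ is the $i$-th coordinate vector. $\phi:\mathbb{R}^n\to\mathbb{R}^p$ is the natural quadratic basis $\phi(z)=[1,z_1,\ldots,z_n,\tfrac12z_1^2,z_1z_2,\ldots,z_1z_n,\tfrac12z_2^2,z_2z_3,\ldots,z_{n-1}z_n,\tfrac12z_n^2]^T$. $\|A\|_\infty$ is the maximum absolute row sum. *)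

theory Defs
  imports "Jordan_Normal_Form.Matrix"
begin

definition quad_basis :: "nat \<Rightarrow> real vec \<Rightarrow> real vec" where
  "quad_basis n z = vec_of_list
     ([1] @ [z $ i. i \<leftarrow> [0..<n]] @
      concat [[(if i = j then (z $ i)^2 / 2 else z $ i * z $ j). j \<leftarrow> [i..<n]]. i \<leftarrow> [0..<n]])"

definition interp_points :: "nat \<Rightarrow> real vec \<Rightarrow> real \<Rightarrow> real vec list" where
  "interp_points n x D =
     [x] @ [x + D \<cdot>\<^sub>v unit_vec n i. i \<leftarrow> [0..<n]]
         @ [x - D \<cdot>\<^sub>v unit_vec n i. i \<leftarrow> [0..<n]]
         @ concat [[x + D \<cdot>\<^sub>v (unit_vec n i + unit_vec n j). j \<leftarrow> [Suc i..<n]]. i \<leftarrow> [0..<n]]"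

definition Qhat :: "nat \<Rightarrow> real vec \<Rightarrow> real \<Rightarrow> real mat" where
  "Qhat n x D = mat_of_rows ((n+1)*(n+2) div 2)
     [quad_basis n ((1 / D) \<cdot>\<^sub>v (y - x)). y \<leftarrow> interp_points n x D]"

definition mat_inf_norm :: "real mat \<Rightarrow> real" where
  "mat_inf_norm A = Max {(\<Sum>j<dim_col A. \<bar>A $$ (i, j)\<bar>) | i. i < dim_row A}"

end

theory Submission
  imports Defs "Jordan_Normal_Form.Determinant"
begin

text \<open>The rows of Qhat are phi evaluated at the stencil points 0, e_i, -e_i and e_i + e_j
  (i < j), whatever x and D are. The unit vectors of R^p belonging to the monomials 1, z_i,
  z_i^2/2 and z_i z_j are phi(0), (phi(e_i) - phi(-e_i)) / 2, phi(e_i) + phi(-e_i) - 2 phi(0) and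
  phi(e_i + e_j) - phi(e_i) - phi(e_j) + phi(0): combinations of at most four rows with coefficients
  of absolute sum at most 4. They are the rows of a left inverse of the square matrix Qhat, hence of
  its inverse, so in fact the bound 4 holds.\<close>

definition sparse_weights :: "(nat \<times> real) list \<Rightarrow> nat \<Rightarrow> real" where
  "sparse_weights ps k = (\<Sum>(l, a) \<leftarrow> ps. if l = k then a else 0)"

lemma sum_sparse_weights_mult:
  assumes "\<forall>(l, a) \<in> set ps. l < P"
  shows "(\<Sum>k<P. sparse_weights ps k * f k) = (\<Sum>(l, a) \<leftarrow> ps. a * f l)"
  using assms
proof (induction ps)
  case (Cons p ps)
  obtain l a where p: "p = (l, a)" by fastforce
  have "(\<Sum>k<P. (if l = k then a else 0) * f k) = (\<Sum>k<P. if l = k then a * f l else 0)"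
    by (rule sum.cong) auto
  also have "\<dots> = a * f l"
    using Cons.prems by (simp add: p)
  finally show ?case
    using Cons by (simp add: p sparse_weights_def distrib_right sum.distrib)
qed (simp add: sparse_weights_def)

lemma sum_abs_sparse_weights_le: "(\<Sum>k<P. \<bar>sparse_weights ps k\<bar>) \<le> (\<Sum>(l, a) \<leftarrow> ps. \<bar>a\<bar>)"
proof (induction ps)
  case (Cons p ps)
  obtain l a where p: "p = (l, a)" by fastforce
  have "(\<Sum>k<P. \<bar>sparse_weights (p # ps) k\<bar>)
      \<le> (\<Sum>k<P. (if l = k then \<bar>a\<bar> else 0) + \<bar>sparse_weights ps k\<bar>)"
    by (rule sum_mono) (auto simp: sparse_weights_def p abs_triangle_ineq)
  also have "\<dots> \<le> \<bar>a\<bar> + (\<Sum>(l, a) \<leftarrow> ps. \<bar>a\<bar>)"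
    using Cons.IH by (simp add: sum.distrib add_increasing)
  finally show ?case by (simp add: p)
qed (simp add: sparse_weights_def)

lemma mat_inf_norm_le:
  assumes "0 < dim_row A" and "\<And>i. i < dim_row A \<Longrightarrow> (\<Sum>j<dim_col A. \<bar>A $$ (i, j)\<bar>) \<le> C"
  shows "mat_inf_norm A \<le> C"
  unfolding mat_inf_norm_def using assms by (subst Max_le_iff) auto

lemma left_inverse_is_inverse:
  fixes Q W :: "'a :: field mat"
  assumes Q: "Q \<in> carrier_mat m m" and W: "W \<in> carrier_mat m m" and WQ: "W * Q = 1\<^sub>m m"
  shows "invertible_mat Q" and "inverts_mat Q B \<Longrightarrow> inverts_mat B Q \<Longrightarrow> B = W"
proof -
  have "Q * W = 1\<^sub>m m" by (rule mat_mult_left_right_inverse[OF W Q WQ])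
  then show "invertible_mat Q"
    using Q W WQ by (auto simp: invertible_mat_def inverts_mat_def)
  assume "inverts_mat Q B" and "inverts_mat B Q"
  then have QB: "Q * B = 1\<^sub>m m" and BQ: "B * Q = 1\<^sub>m (dim_row B)"
    using Q by (auto simp: inverts_mat_def)
  have B: "B \<in> carrier_mat m m"
    using arg_cong[OF QB, of dim_col] arg_cong[OF BQ, of dim_col] Q by auto
  have "B = (W * Q) * B" using WQ B by simp
  also have "\<dots> = W * (Q * B)" using W Q B by (rule assoc_mult_mat)
  also have "\<dots> = W" using QB W by simp
  finally show "B = W" .
qed

definition unit_row_combination :: "real mat \<Rightarrow> (nat \<times> real) list \<Rightarrow> nat \<Rightarrow> bool" where
  "unit_row_combination A ps r \<longleftrightarrow> (\<forall>(k, a) \<in> set ps. k < dim_row A) \<and>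
     (\<forall>c < dim_col A. (\<Sum>(k, a) \<leftarrow> ps. a * A $$ (k, c)) = unit_vec (dim_col A) r $ c)"

lemma left_inverse_from_unit_row_combinations:
  assumes A: "A \<in> carrier_mat m m"
    and comb: "\<And>r. r < m \<Longrightarrow> \<exists>ps. unit_row_combination A ps r \<and> (\<Sum>(k, a) \<leftarrow> ps. \<bar>a\<bar>) \<le> C"
  obtains W where "W \<in> carrier_mat m m" and "W * A = 1\<^sub>m m"
    and "\<And>r. r < m \<Longrightarrow> (\<Sum>k<m. \<bar>W $$ (r, k)\<bar>) \<le> C"
proof -
  obtain ps where ps: "\<And>r. r < m \<Longrightarrow> unit_row_combination A (ps r) r \<and> (\<Sum>(k, a) \<leftarrow> ps r. \<bar>a\<bar>) \<le> C"
    using comb by metis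
  define W where "W = mat m m (\<lambda>(r, k). sparse_weights (ps r) k)"
  have W: "W \<in> carrier_mat m m" by (simp add: W_def)
  show thesis
  proof (rule that[OF W])
    show "W * A = 1\<^sub>m m"
    proof (rule eq_matI)
      fix r c assume "r < dim_row (1\<^sub>m m :: real mat)" and "c < dim_col (1\<^sub>m m :: real mat)"
      then have r: "r < m" and c: "c < m" by simp_all
      have "(W * A) $$ (r, c) = (\<Sum>k<m. sparse_weights (ps r) k * A $$ (k, c))"
        using r c A by (simp add: W_def scalar_prod_def atLeast0LessThan)
      also have "\<dots> = (\<Sum>(k, a) \<leftarrow> ps r. a * A $$ (k, c))"
        using ps[OF r] A by (intro sum_sparse_weights_mult) (simp add: unit_row_combination_def)
      also have "\<dots> = 1\<^sub>m m $$ (r, c)"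
        using ps[OF r] A r c by (simp add: unit_row_combination_def)
      finally show "(W * A) $$ (r, c) = 1\<^sub>m m $$ (r, c)" .
    qed (use A in \<open>simp_all add: W_def\<close>)
  next
    fix r assume r: "r < m"
    have "(\<Sum>k<m. \<bar>W $$ (r, k)\<bar>) = (\<Sum>k<m. \<bar>sparse_weights (ps r) k\<bar>)"
      using r by (simp add: W_def)
    also have "\<dots> \<le> C"
      using sum_abs_sparse_weights_le ps[OF r] by (rule order.trans[OF _ conjunct2])
    finally show "(\<Sum>k<m. \<bar>W $$ (r, k)\<bar>) \<le> C" .
  qed
qed

lemma mat_inf_norm_inverse_le:
  assumes A: "A \<in> carrier_mat m m" and "0 < m"
    and "\<And>r. r < m \<Longrightarrow> \<exists>ps. unit_row_combination A ps r \<and> (\<Sum>(k, a) \<leftarrow> ps. \<bar>a\<bar>) \<le> C"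
  shows "invertible_mat A \<and> (\<forall>B. inverts_mat A B \<and> inverts_mat B A \<longrightarrow> mat_inf_norm B \<le> C)"
proof -
  obtain W where W: "W \<in> carrier_mat m m" and WA: "W * A = 1\<^sub>m m"
    and rows: "\<And>r. r < m \<Longrightarrow> (\<Sum>k<m. \<bar>W $$ (r, k)\<bar>) \<le> C"
    using left_inverse_from_unit_row_combinations[OF assms(1,3)] by blast
  have "mat_inf_norm W \<le> C"
    using W rows \<open>0 < m\<close> by (intro mat_inf_norm_le) auto
  then show ?thesis
    using left_inverse_is_inverse[OF A W WA] by blast
qed

definition quad_dim :: "nat \<Rightarrow> nat" where
  "quad_dim n = (n + 1) * (n + 2) div 2"

definition quad_pairs :: "nat \<Rightarrow> (nat \<times> nat) list" where
  "quad_pairs n = concat [[(i, j). j \<leftarrow> [i..<n]]. i \<leftarrow> [0..<n]]"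

definition cross_pairs :: "nat \<Rightarrow> (nat \<times> nat) list" where
  "cross_pairs n = concat [[(i, j). j \<leftarrow> [Suc i..<n]]. i \<leftarrow> [0..<n]]"

definition quad_monomial :: "real vec \<Rightarrow> nat \<times> nat \<Rightarrow> real" where
  "quad_monomial z = (\<lambda>(i, j). if i = j then (z $ i)^2 / 2 else z $ i * z $ j)"

lemma quad_basis_altdef:
  "quad_basis n z = vec_of_list (1 # map (($) z) [0..<n] @ map (quad_monomial z) (quad_pairs n))"
  unfolding quad_basis_def quad_pairs_def quad_monomial_def by (simp add: map_concat comp_def)

lemma distinct_quad_pairs: "distinct (quad_pairs n)"
  unfolding quad_pairs_def by (intro distinct_concat) (auto simp: distinct_map inj_on_def upt_conv_Cons)

lemma set_quad_pairs: "set (quad_pairs n) = {(i, j). i \<le> j \<and> j < n}"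
  unfolding quad_pairs_def by force

lemma set_cross_pairs: "set (cross_pairs n) = {(i, j). i < j \<and> j < n}"
  unfolding cross_pairs_def by force

lemma length_quad_pairs: "length (quad_pairs n) = n * (n + 1) div 2"
proof -
  have "length (quad_pairs n) = (\<Sum>i<n. n - i)"
    by (simp add: quad_pairs_def length_concat sum_list_sum_nth atLeast0LessThan)
  also have "\<dots> = (\<Sum>i<n. Suc i)"
    by (subst sum.nat_diff_reindex[symmetric]) (simp add: Suc_diff_Suc)
  also have "\<dots> = n * (n + 1) div 2"
    by (induction n) auto
  finally show ?thesis .
qed

lemma length_cross_pairs: "length (cross_pairs n) + n = length (quad_pairs n)"
proof -
  have "length (quad_pairs n) = (\<Sum>i<n. n - i)"
    by (simp add: quad_pairs_def length_concat sum_list_sum_nth atLeast0LessThan)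
  also have "\<dots> = (\<Sum>i<n. Suc (n - Suc i))"
    by (rule sum.cong) auto
  also have "\<dots> = length (cross_pairs n) + n"
    by (simp add: cross_pairs_def length_concat sum_list_sum_nth atLeast0LessThan sum_Suc)
  finally show ?thesis by simp
qed

lemma quad_dim_eq: "quad_dim n = Suc n + length (quad_pairs n)"
proof -
  have "(n + 1) * (n + 2) = n * (n + 1) + 2 * Suc n"
    by (simp add: algebra_simps)
  then show ?thesis
    unfolding quad_dim_def by (metis length_quad_pairs div_mult_self2 zero_neq_numeral)
qed

lemma dim_quad_basis: "dim_vec (quad_basis n z) = quad_dim n"
  by (simp add: quad_basis_altdef quad_dim_eq)

lemma quad_basis_nth:
  "quad_basis n z $ 0 = 1"
  "i < n \<Longrightarrow> quad_basis n z $ Suc i = z $ i"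
  "t < length (quad_pairs n) \<Longrightarrow> quad_basis n z $ Suc (n + t) = quad_monomial z (quad_pairs n ! t)"
  by (simp_all add: quad_basis_altdef vec_of_list_index nth_append)

lemma quad_index_cases:
  assumes "c < quad_dim n"
  obtains "c = 0"
  | i where "i < n" "c = Suc i"
  | t i j where "t < length (quad_pairs n)" "c = Suc (n + t)" "quad_pairs n ! t = (i, j)" "i \<le> j" "j < n"
proof (cases "c \<le> n")
  case True
  then show thesis using that(1,2) by (cases c) auto
next
  case False
  define t where "t = c - Suc n"
  have t: "t < length (quad_pairs n)" "c = Suc (n + t)"
    using assms False quad_dim_eq[of n] by (auto simp: t_def)
  obtain i j where ij: "quad_pairs n ! t = (i, j)" by fastforce
  have "(i, j) \<in> set (quad_pairs n)" using t(1) ij nth_mem by metis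
  then show thesis using that(3)[OF t ij] by (auto simp: set_quad_pairs)
qed

lemma quad_basis_zero: "quad_basis n (0\<^sub>v n) = unit_vec (quad_dim n) 0"
proof (rule eq_vecI)
  fix c assume "c < dim_vec (unit_vec (quad_dim n) 0 :: real vec)"
  then have c: "c < quad_dim n" by simp
  then show "quad_basis n (0\<^sub>v n) $ c = unit_vec (quad_dim n) 0 $ c"
    by (cases rule: quad_index_cases) (use c in \<open>auto simp: quad_basis_nth quad_monomial_def unit_vec_def\<close>)
qed (simp add: dim_quad_basis)

lemma quad_basis_central_difference:
  assumes "i < n"
  shows "(1 / 2) \<cdot>\<^sub>v (quad_basis n (unit_vec n i) - quad_basis n (- unit_vec n i))
    = unit_vec (quad_dim n) (Suc i)"
proof (rule eq_vecI)
  fix c assume "c < dim_vec (unit_vec (quad_dim n) (Suc i) :: real vec)"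
  then have c: "c < quad_dim n" by simp
  then show "((1 / 2) \<cdot>\<^sub>v (quad_basis n (unit_vec n i) - quad_basis n (- unit_vec n i))) $ c
      = unit_vec (quad_dim n) (Suc i) $ c"
    by (cases rule: quad_index_cases)
      (use c assms in \<open>auto simp: quad_basis_nth quad_monomial_def dim_quad_basis unit_vec_def\<close>)
qed (simp add: dim_quad_basis)

lemma quad_basis_second_difference:
  assumes "t < length (quad_pairs n)" and "quad_pairs n ! t = (i, i)"
  shows "quad_basis n (unit_vec n i) + quad_basis n (- unit_vec n i) - 2 \<cdot>\<^sub>v quad_basis n (0\<^sub>v n)
    = unit_vec (quad_dim n) (Suc (n + t))"
proof (rule eq_vecI)
  have "(i, i) \<in> set (quad_pairs n)" using assms by (metis nth_mem)
  then have "i < n" by (simp add: set_quad_pairs)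
  fix c assume "c < dim_vec (unit_vec (quad_dim n) (Suc (n + t)) :: real vec)"
  then have c: "c < quad_dim n" by simp
  then show "(quad_basis n (unit_vec n i) + quad_basis n (- unit_vec n i) - 2 \<cdot>\<^sub>v quad_basis n (0\<^sub>v n)) $ c
      = unit_vec (quad_dim n) (Suc (n + t)) $ c"
  proof (cases rule: quad_index_cases)
    case (3 t' a b)
    have "t' = t \<longleftrightarrow> (a, b) = (i, i)"
      using 3 assms by (metis nth_eq_iff_index_eq distinct_quad_pairs)
    then show ?thesis
      using 3 c \<open>i < n\<close> by (auto simp: quad_basis_nth quad_monomial_def dim_quad_basis unit_vec_def)
  qed (use c in \<open>simp_all add: quad_basis_nth dim_quad_basis unit_vec_def\<close>)
qed (simp add: dim_quad_basis)

lemma quad_basis_mixed_difference: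
  assumes "t < length (quad_pairs n)" and "quad_pairs n ! t = (i, j)" and "i < j"
  shows "quad_basis n (unit_vec n i + unit_vec n j) - quad_basis n (unit_vec n i)
      - quad_basis n (unit_vec n j) + quad_basis n (0\<^sub>v n)
    = unit_vec (quad_dim n) (Suc (n + t))"
proof (rule eq_vecI)
  have "(i, j) \<in> set (quad_pairs n)" using assms by (metis nth_mem)
  then have "j < n" by (simp add: set_quad_pairs)
  fix c assume "c < dim_vec (unit_vec (quad_dim n) (Suc (n + t)) :: real vec)"
  then have c: "c < quad_dim n" by simp
  then show "(quad_basis n (unit_vec n i + unit_vec n j) - quad_basis n (unit_vec n i)
      - quad_basis n (unit_vec n j) + quad_basis n (0\<^sub>v n)) $ c
      = unit_vec (quad_dim n) (Suc (n + t)) $ c"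
  proof (cases rule: quad_index_cases)
    case (3 t' a b)
    have "t' = t \<longleftrightarrow> (a, b) = (i, j)"
      using 3 assms by (metis nth_eq_iff_index_eq distinct_quad_pairs)
    then show ?thesis
      using 3 c assms(3) \<open>j < n\<close> by (auto simp: quad_basis_nth quad_monomial_def dim_quad_basis unit_vec_def)
  qed (use c \<open>j < n\<close> in \<open>auto simp: quad_basis_nth dim_quad_basis unit_vec_def\<close>)
qed (simp add: dim_quad_basis)

definition stencil :: "nat \<Rightarrow> real vec list" where
  "stencil n = 0\<^sub>v n # map (unit_vec n) [0..<n] @ map (\<lambda>i. - unit_vec n i) [0..<n]
     @ map (\<lambda>(i, j). unit_vec n i + unit_vec n j) (cross_pairs n)"

lemma length_stencil: "length (stencil n) = quad_dim n"
  using length_cross_pairs[of n] by (simp add: stencil_def quad_dim_eq)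

lemma stencil_nth:
  "stencil n ! 0 = 0\<^sub>v n"
  "i < n \<Longrightarrow> stencil n ! Suc i = unit_vec n i"
  "i < n \<Longrightarrow> stencil n ! Suc (n + i) = - unit_vec n i"
  "s < length (cross_pairs n) \<Longrightarrow> cross_pairs n ! s = (i, j)
     \<Longrightarrow> stencil n ! Suc (2 * n + s) = unit_vec n i + unit_vec n j"
  by (simp_all add: stencil_def nth_append)

lemma stencil_carrier: "u \<in> set (stencil n) \<Longrightarrow> u \<in> carrier_vec n"
  by (auto simp: stencil_def)

lemma interp_points_stencil:
  assumes "x \<in> carrier_vec n"
  shows "interp_points n x D = map (\<lambda>u. x + D \<cdot>\<^sub>v u) (stencil n)"
  using assms by (auto simp: interp_points_def stencil_def cross_pairs_def map_concat comp_def)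

definition stencil_matrix :: "nat \<Rightarrow> real mat" where
  "stencil_matrix n = mat_of_rows (quad_dim n) (map (quad_basis n) (stencil n))"

lemma stencil_matrix_carrier: "stencil_matrix n \<in> carrier_mat (quad_dim n) (quad_dim n)"
  unfolding stencil_matrix_def by (metis length_map length_stencil mat_of_rows_carrier(1))

lemma stencil_matrix_index:
  "k < quad_dim n \<Longrightarrow> c < quad_dim n \<Longrightarrow> stencil_matrix n $$ (k, c) = quad_basis n (stencil n ! k) $ c"
  by (simp add: stencil_matrix_def mat_of_rows_index length_stencil)

lemma Qhat_stencil:
  assumes "x \<in> carrier_vec n" and "D \<noteq> 0"
  shows "Qhat n x D = stencil_matrix n"
proof -
  have "quad_basis n ((1 / D) \<cdot>\<^sub>v (x + D \<cdot>\<^sub>v u - x)) = quad_basis n u" if "u \<in> set (stencil n)" for u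
    using assms stencil_carrier[OF that] by (intro arg_cong[where f="quad_basis n"] eq_vecI) auto
  then show ?thesis
    unfolding Qhat_def stencil_matrix_def quad_dim_def[symmetric] interp_points_stencil[OF assms(1)] map_map
    by (intro arg_cong[where f="mat_of_rows _"] map_cong) simp_all
qed

lemma unit_row_combination_stencil_matrix:
  "unit_row_combination (stencil_matrix n) ps r \<longleftrightarrow> (\<forall>(k, a) \<in> set ps. k < quad_dim n) \<and>
     (\<forall>c < quad_dim n. (\<Sum>(k, a) \<leftarrow> ps. a * quad_basis n (stencil n ! k) $ c) = unit_vec (quad_dim n) r $ c)"
proof -
  have "(\<Sum>(k, a) \<leftarrow> ps. a * stencil_matrix n $$ (k, c)) = (\<Sum>(k, a) \<leftarrow> ps. a * quad_basis n (stencil n ! k) $ c)"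
    if "\<forall>(k, a) \<in> set ps. k < quad_dim n" and "c < quad_dim n" for c
    using that by (intro arg_cong[where f = sum_list] map_cong) (auto simp: stencil_matrix_index)
  then show ?thesis
    using stencil_matrix_carrier[of n] by (auto simp: unit_row_combination_def)
qed

lemma unit_vec_stencil_combination:
  assumes "r < quad_dim n"
  shows "\<exists>ps. unit_row_combination (stencil_matrix n) ps r \<and> (\<Sum>(k, a) \<leftarrow> ps. \<bar>a\<bar>) \<le> 4"
  using assms
proof (cases rule: quad_index_cases)
  case 1
  then have "unit_row_combination (stencil_matrix n) [(0, 1)] r"
    using assms by (simp add: unit_row_combination_stencil_matrix stencil_nth quad_basis_zero)
  then show ?thesis by fastforce
next
  case (2 i)
  let ?ps = "[(Suc i, 1 / 2), (Suc (n + i), - 1 / 2)]"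
  have "unit_row_combination (stencil_matrix n) ?ps r"
    using 2 quad_basis_central_difference[of i n] stencil_nth(2,3)[of i n]
      quad_dim_eq[of n] length_cross_pairs[of n]
    by (auto simp: unit_row_combination_stencil_matrix dim_quad_basis algebra_simps dest!: vec_eq_iff[THEN iffD1])
  then show ?thesis by fastforce
next
  case (3 t i j)
  then consider "i = j" | "i < j" by linarith
  then show ?thesis
  proof cases
    case 1
    let ?ps = "[(Suc i, 1), (Suc (n + i), 1), (0, - 2)]"
    have "unit_row_combination (stencil_matrix n) ?ps r"
      using 3 1 quad_basis_second_difference[of t n i] stencil_nth(1)[of n] stencil_nth(2,3)[of i n]
        quad_dim_eq[of n] length_cross_pairs[of n]
      by (auto simp: unit_row_combination_stencil_matrix dim_quad_basis algebra_simps dest!: vec_eq_iff[THEN iffD1])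
    then show ?thesis by fastforce
  next
    case 2
    then have "(i, j) \<in> set (cross_pairs n)" using 3 by (simp add: set_cross_pairs)
    then obtain s where s: "s < length (cross_pairs n)" "cross_pairs n ! s = (i, j)"
      by (metis in_set_conv_nth)
    let ?ps = "[(Suc (2 * n + s), 1), (Suc i, - 1), (Suc j, - 1), (0, 1)]"
    have "unit_row_combination (stencil_matrix n) ?ps r"
      using 3 2 s quad_basis_mixed_difference[of t n i j] stencil_nth(1)[of n] stencil_nth(2)[of i n]
        stencil_nth(2)[of j n] stencil_nth(4)[OF s] quad_dim_eq[of n] length_cross_pairs[of n]
      by (auto simp: unit_row_combination_stencil_matrix dim_quad_basis algebra_simps dest!: vec_eq_iff[THEN iffD1])
    then show ?thesis by fastforce
  qed
qed

theorem lemma5p6: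
  fixes n :: nat and x :: "real vec" and D :: real
  assumes "x \<in> carrier_vec n" and "D > 0"
  shows "invertible_mat (Qhat n x D) \<and>
         (\<forall>B. inverts_mat (Qhat n x D) B \<and> inverts_mat B (Qhat n x D)
               \<longrightarrow> mat_inf_norm B \<le> 8)"
proof -
  have "Qhat n x D = stencil_matrix n"
    using assms by (simp add: Qhat_stencil)
  moreover have "0 < quad_dim n"
    by (simp add: quad_dim_eq)
  ultimately show ?thesis
    using mat_inf_norm_inverse_le[OF stencil_matrix_carrier _ unit_vec_stencil_combination, of n]
    by fastforce
qed

end
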